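(* There is a universal constant $c>0$ such that the following holds. Let $\mathbf x\sim\mathcal N(0,I_p)$ and let $v$ be uniform on $[s,t]$ with $0\le s<t$, independent of $\mathbf x$. For $\mathbf u\in\mathbb R^p$ and $b\in\mathbb R$, let $\mathbf a=b\,\mathbb I(|b+\langle\mathbf x,\mathbf u\rangle|<v)\,\mathbf x$. Then for every $\mathbf t'\in\mathbb R^p$, $$\mathbb E\big[e^{\langle\mathbf t',\mathbf a-\mathbb E[\mathbf a]\rangle}\big]\le e^{c\,b^2\|\mathbf t'\|^2/2}.$$
   Context: $\mathbb I(\cdot)$ is the indicator function; $\|\cdot\|$ is the Euclidean norm. *)

theory Defs
  imports "HOL-Probability.Probability"
begin

text \<open>Standard Gaussian vector N(0, I_p), realised on functions nat => real
  supported on the index set {..<p}.\<close>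
definition gauss_vec :: "nat \<Rightarrow> (nat \<Rightarrow> real) measure" where
  "gauss_vec p = PiM {..<p} (\<lambda>_. density lborel std_normal_density)"

definition joint_law :: "nat \<Rightarrow> real \<Rightarrow> real \<Rightarrow> ((nat \<Rightarrow> real) \<times> real) measure" where
  "joint_law p s t = gauss_vec p \<Otimes>\<^sub>M uniform_measure lborel {s..t}"

definition inner_p :: "nat \<Rightarrow> (nat \<Rightarrow> real) \<Rightarrow> (nat \<Rightarrow> real) \<Rightarrow> real" where
  "inner_p p x y = (\<Sum>j<p. x j * y j)"

definition norm_p :: "nat \<Rightarrow> (nat \<Rightarrow> real) \<Rightarrow> real" where
  "norm_p p x = sqrt (\<Sum>j<p. (x j)\<^sup>2)"

definition avec :: "nat \<Rightarrow> (nat \<Rightarrow> real) \<Rightarrow> real \<Rightarrow> (nat \<Rightarrow> real) \<times> real \<Rightarrow> nat \<Rightarrow> real" where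
  "avec p u b \<omega> i = b * indicator {w. \<bar>b + inner_p p (fst \<omega>) u\<bar> < snd \<omega>} \<omega> * fst \<omega> i"

end

theory Submission
  imports Defs
begin

text \<open>Write \<open>Y = b \<langle>t', x\<rangle>\<close> and \<open>Z = \<langle>t', a\<rangle>\<close>. Then \<open>Z\<close> is \<open>Y\<close> masked by an indicator,
  \<open>Z \<in> {0, Y}\<close>, so pointwise \<open>exp Z \<le> exp Y + Z - Y\<close>, and with \<open>m = E Z\<close>
  \<open>E exp (Z - m) \<le> exp (-m) (E exp Y + m)\<close>. Since \<open>Y\<close> is centred Gaussian,
  \<open>E exp (\<plusminus>Y) = exp q\<close> with \<open>q = b\<^sup>2 \<parallel>t'\<parallel>\<^sup>2 / 2\<close>, and Jensen gives
  \<open>exp \<bar>m\<bar> \<le> exp (E \<bar>Y\<bar>) \<le> 2 exp q\<close>. An elementary estimate then bounds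
  \<open>exp (-m) (exp q + m)\<close> by \<open>exp (4 q)\<close>, so the constant \<open>c = 4\<close> works.\<close>

lemma exp_abs_le_exp_add_exp_minus: "exp \<bar>y\<bar> \<le> exp y + exp (- y)" for y :: real
  by (cases "0 \<le> y") (simp_all add: add_increasing add_increasing2 less_imp_le)

lemma integrable_of_integrable_exp:
  fixes Y :: "'a \<Rightarrow> real"
  assumes "Y \<in> borel_measurable M"
    and "integrable M (\<lambda>\<omega>. exp (Y \<omega>))" "integrable M (\<lambda>\<omega>. exp (- Y \<omega>))"
  shows "integrable M Y"
proof (rule Bochner_Integration.integrable_bound
    [OF Bochner_Integration.integrable_add[OF assms(2,3)] assms(1)])
  have "\<bar>Y \<omega>\<bar> \<le> exp (Y \<omega>) + exp (- Y \<omega>)" for \<omega>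
    using exp_ge_add_one_self[of "\<bar>Y \<omega>\<bar>"] exp_abs_le_exp_add_exp_minus[of "Y \<omega>"] by linarith
  then show "AE \<omega> in M. norm (Y \<omega>) \<le> norm (exp (Y \<omega>) + exp (- Y \<omega>))"
    by (intro AE_I2) (simp add: add_pos_pos less_imp_le)
qed

lemma integrable_masked:
  fixes Y Z :: "'a \<Rightarrow> real"
  assumes "integrable M Y" "Z \<in> borel_measurable M" "\<And>\<omega>. Z \<omega> = 0 \<or> Z \<omega> = Y \<omega>"
  shows "integrable M Z"
  by (rule Bochner_Integration.integrable_bound[OF assms(1,2)], intro AE_I2)
    (metis assms(3) norm_ge_zero norm_zero order_refl)

lemma (in prob_space) exp_expectation_abs_le:
  fixes Y :: "'a \<Rightarrow> real"
  assumes Y: "Y \<in> borel_measurable M"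
    and exp_int: "integrable M (\<lambda>\<omega>. exp (Y \<omega>))" "integrable M (\<lambda>\<omega>. exp (- Y \<omega>))"
  shows "exp (expectation (\<lambda>\<omega>. \<bar>Y \<omega>\<bar>))
    \<le> expectation (\<lambda>\<omega>. exp (Y \<omega>)) + expectation (\<lambda>\<omega>. exp (- Y \<omega>))"
proof -
  have exp_sum_int: "integrable M (\<lambda>\<omega>. exp (Y \<omega>) + exp (- Y \<omega>))"
    using exp_int by (rule Bochner_Integration.integrable_add)
  have exp_abs_int: "integrable M (\<lambda>\<omega>. exp \<bar>Y \<omega>\<bar>)"
    by (rule Bochner_Integration.integrable_bound[OF exp_sum_int])
      (use Y in \<open>auto intro!: AE_I2 simp: exp_abs_le_exp_add_exp_minus add_pos_pos less_imp_le\<close>)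
  have "exp (expectation (\<lambda>\<omega>. \<bar>Y \<omega>\<bar>)) \<le> expectation (\<lambda>\<omega>. exp \<bar>Y \<omega>\<bar>)"
    by (rule jensens_inequality[where I = UNIV])
      (use integrable_of_integrable_exp[OF Y exp_int] exp_abs_int exp_convex in auto)
  also have "\<dots> \<le> expectation (\<lambda>\<omega>. exp (Y \<omega>) + exp (- Y \<omega>))"
    by (rule integral_mono[OF exp_abs_int exp_sum_int exp_abs_le_exp_add_exp_minus])
  also have "\<dots> = expectation (\<lambda>\<omega>. exp (Y \<omega>)) + expectation (\<lambda>\<omega>. exp (- Y \<omega>))"
    using exp_int by (rule Bochner_Integration.integral_add)
  finally show ?thesis .
qed

lemma exp_neg_mult_exp_add_le:
  fixes q m A :: real
  assumes q: "0 \<le> q" and m: "\<bar>m\<bar> \<le> A" and A: "exp A \<le> 2 * exp q"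
  shows "exp (- m) * (exp q + m) \<le> exp (4 * q)"
proof -
  have "exp (- m) * (1 + m) \<le> exp (- m) * exp m"
    by (intro mult_left_mono) (auto simp: exp_ge_add_one_self add.commute)
  then have head: "exp (- m) * (1 + m) \<le> 1"
    by (simp add: exp_minus)
  have "1 - q \<le> exp (- q)"
    using exp_ge_add_one_self[of "- q"] by simp
  then have "(1 - q) * exp q \<le> exp (- q) * exp q"
    by (intro mult_right_mono) auto
  then have exp_q: "exp q - 1 \<le> q * exp q"
    by (simp add: exp_minus field_simps)
  have "exp (- m) \<le> exp A"
    using m by simp
  then have "exp (- m) * (exp q - 1) \<le> exp A * (exp q - 1)"
    using q by (intro mult_right_mono) auto
  also have "\<dots> \<le> (2 * exp q) * (q * exp q)"
    by (rule mult_mono[OF A exp_q]) (use q in auto)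
  also have "\<dots> = 2 * q * (exp q * exp q)"
    by (simp only: ac_simps)
  also have "\<dots> = 2 * q * exp (2 * q)"
    by (simp only: mult_2 exp_add)
  finally have tail: "exp (- m) * (exp q - 1) \<le> 2 * q * exp (2 * q)" .
  have "1 \<le> exp (2 * q)"
    using q by simp
  have "exp (- m) * (exp q + m) = exp (- m) * (1 + m) + exp (- m) * (exp q - 1)"
    by (simp add: algebra_simps)
  also have "\<dots> \<le> (1 + 2 * q) * exp (2 * q)"
    unfolding distrib_right mult_1 using head tail \<open>1 \<le> exp (2 * q)\<close> by linarith
  also have "\<dots> \<le> exp (2 * q) * exp (2 * q)"
    by (intro mult_right_mono) (auto simp: exp_ge_add_one_self add.commute)
  also have "\<dots> = exp (4 * q)"
    by (simp only: exp_add[symmetric]) simp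
  finally show ?thesis .
qed

lemma (in prob_space) nn_integral_exp_masked_le:
  fixes Y Z :: "'a \<Rightarrow> real"
  assumes Y_int: "integrable M Y" and exp_int: "integrable M (\<lambda>\<omega>. exp (Y \<omega>))"
    and mean: "expectation Y = 0"
    and Z: "Z \<in> borel_measurable M" "\<And>\<omega>. Z \<omega> = 0 \<or> Z \<omega> = Y \<omega>"
  shows "(\<integral>\<^sup>+\<omega>. ennreal (exp (Z \<omega> - c)) \<partial>M)
    \<le> ennreal (exp (- c) * (expectation (\<lambda>\<omega>. exp (Y \<omega>)) + expectation Z))"
proof -
  have Z_int: "integrable M Z"
    using Y_int Z by (rule integrable_masked)
  \<comment> \<open>On the event \<open>Z = 0\<close> this is \<open>1 + Y \<le> exp Y\<close>; on \<open>Z = Y\<close> it is an equality.\<close>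
  have dominate: "exp (Z \<omega>) \<le> exp (Y \<omega>) + Z \<omega> - Y \<omega>" for \<omega>
    using Z(2)[of \<omega>] exp_ge_add_one_self[of "Y \<omega>"] by (smt (verit) exp_zero)
  define H where "H \<omega> = exp (- c) * (exp (Y \<omega>) + Z \<omega> - Y \<omega>)" for \<omega>
  have H_int: "integrable M H"
    unfolding H_def[abs_def] using exp_int Y_int Z_int
    by (intro integrable_mult_right Bochner_Integration.integrable_diff Bochner_Integration.integrable_add)
  have H_nonneg: "0 \<le> H \<omega>" for \<omega>
    unfolding H_def using dominate[of \<omega>] exp_gt_zero[of "Z \<omega>"] exp_ge_zero[of "- c"]
    by (intro mult_nonneg_nonneg; linarith)
  have "(\<integral>\<^sup>+\<omega>. ennreal (exp (Z \<omega> - c)) \<partial>M) \<le> (\<integral>\<^sup>+\<omega>. ennreal (H \<omega>) \<partial>M)"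
    using dominate by (intro nn_integral_mono ennreal_leI) (simp add: H_def exp_diff exp_minus divide_inverse)
  also have "\<dots> = ennreal (expectation H)"
    using H_int H_nonneg by (intro nn_integral_eq_integral) auto
  also have "expectation H = exp (- c) * (expectation (\<lambda>\<omega>. exp (Y \<omega>)) + expectation Z)"
    using exp_int Y_int Z_int mean by (simp add: H_def[abs_def])
  finally show ?thesis .
qed

lemma (in prob_space) nn_integral_exp_centered_masked_le:
  fixes Y Z :: "'a \<Rightarrow> real"
  assumes Y: "Y \<in> borel_measurable M"
    and exp_pos: "integrable M (\<lambda>\<omega>. exp (Y \<omega>))" "expectation (\<lambda>\<omega>. exp (Y \<omega>)) \<le> exp q"
    and exp_neg: "integrable M (\<lambda>\<omega>. exp (- Y \<omega>))" "expectation (\<lambda>\<omega>. exp (- Y \<omega>)) \<le> exp q"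
    and mean: "expectation Y = 0"
    and Z: "Z \<in> borel_measurable M" "\<And>\<omega>. Z \<omega> = 0 \<or> Z \<omega> = Y \<omega>"
  shows "(\<integral>\<^sup>+\<omega>. ennreal (exp (Z \<omega> - expectation Z)) \<partial>M) \<le> ennreal (exp (4 * q))"
proof -
  define m where "m = expectation Z"
  have Y_int: "integrable M Y"
    using Y exp_pos(1) exp_neg(1) by (rule integrable_of_integrable_exp)
  have Z_int: "integrable M Z"
    using Y_int Z by (rule integrable_masked)
  have "1 = expectation (\<lambda>\<omega>. 1 + Y \<omega>)"
    using Y_int mean by (simp add: prob_space)
  also have "\<dots> \<le> expectation (\<lambda>\<omega>. exp (Y \<omega>))"
    using Y_int exp_pos(1) by (intro integral_mono) (auto simp: exp_ge_add_one_self)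
  also have "\<dots> \<le> exp q"
    by (rule exp_pos(2))
  finally have q: "0 \<le> q"
    by simp
  have abs_le: "\<bar>Z \<omega>\<bar> \<le> \<bar>Y \<omega>\<bar>" for \<omega>
    using Z(2)[of \<omega>] by auto
  have "\<bar>m\<bar> \<le> expectation (\<lambda>\<omega>. \<bar>Z \<omega>\<bar>)"
    unfolding m_def by (rule integral_abs_bound)
  also have "\<dots> \<le> expectation (\<lambda>\<omega>. \<bar>Y \<omega>\<bar>)"
    using Y_int Z_int abs_le by (intro integral_mono) auto
  finally have m_bound: "\<bar>m\<bar> \<le> expectation (\<lambda>\<omega>. \<bar>Y \<omega>\<bar>)" .
  have A_bound: "exp (expectation (\<lambda>\<omega>. \<bar>Y \<omega>\<bar>)) \<le> 2 * exp q"
    using exp_expectation_abs_le[OF Y exp_pos(1) exp_neg(1)] exp_pos(2) exp_neg(2) by simp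
  have "exp (- m) * (expectation (\<lambda>\<omega>. exp (Y \<omega>)) + m) \<le> exp (- m) * (exp q + m)"
    using exp_pos(2) by simp
  also have "\<dots> \<le> exp (4 * q)"
    using q m_bound A_bound by (rule exp_neg_mult_exp_add_le)
  finally show ?thesis
    using nn_integral_exp_masked_le[OF Y_int exp_pos(1) mean Z, of m] unfolding m_def
    by (meson ennreal_leI order_trans)
qed

abbreviation std_normal :: "real measure" where
  "std_normal \<equiv> density lborel std_normal_density"

lemma prob_space_std_normal: "prob_space std_normal"
  by (rule prob_space_normal_density) simp

lemma nn_integral_std_normal_exp:
  "(\<integral>\<^sup>+x. ennreal (exp (m * x)) \<partial>std_normal) = ennreal (exp (m\<^sup>2 / 2))"
proof -
  have shift: "std_normal_density x * exp (m * x) = exp (m\<^sup>2 / 2) * normal_density m 1 x" for x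
  proof -
    have "exp (- x\<^sup>2 / 2) * exp (m * x) = exp (m\<^sup>2 / 2) * exp (- (x - m)\<^sup>2 / 2)"
      unfolding exp_add[symmetric] by (simp add: power2_eq_square field_simps)
    then show ?thesis
      unfolding normal_density_def by simp
  qed
  have "(\<integral>\<^sup>+x. ennreal (exp (m * x)) \<partial>std_normal)
      = (\<integral>\<^sup>+x. ennreal (exp (m\<^sup>2 / 2)) * ennreal (normal_density m 1 x) \<partial>lborel)"
    by (subst nn_integral_density) (auto simp: ennreal_mult[symmetric] shift)
  also have "\<dots> = ennreal (exp (m\<^sup>2 / 2)) * (\<integral>\<^sup>+x. ennreal (normal_density m 1 x) \<partial>lborel)"
    by (rule nn_integral_cmult) simp
  also have "(\<integral>\<^sup>+x. ennreal (normal_density m 1 x) \<partial>lborel) = 1"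
    by (subst nn_integral_eq_integral) auto
  finally show ?thesis
    by simp
qed

lemma std_normal_integrable_mean_zero:
  "integrable std_normal (\<lambda>x. x)" "(\<integral>x. x \<partial>std_normal) = 0"
  using integrable_std_normal_moment[of 1] integral_std_normal_moment_odd[of 0]
  by (auto simp: integrable_density integral_density)

lemma prob_space_gauss_vec: "prob_space (gauss_vec p)"
  unfolding gauss_vec_def by (intro prob_space_PiM prob_space_std_normal)

lemma measurable_inner_p [measurable]: "inner_p p w \<in> borel_measurable (gauss_vec p)"
  unfolding gauss_vec_def inner_p_def by measurable

lemma nn_integral_gauss_vec_exp_inner:
  "(\<integral>\<^sup>+x. ennreal (exp (inner_p p w x)) \<partial>gauss_vec p) = ennreal (exp ((norm_p p w)\<^sup>2 / 2))"
proof -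
  interpret product_sigma_finite "\<lambda>_. std_normal"
    unfolding product_sigma_finite_def
    using prob_space_std_normal prob_space_imp_sigma_finite by blast
  have "(\<integral>\<^sup>+x. ennreal (exp (inner_p p w x)) \<partial>gauss_vec p)
      = (\<integral>\<^sup>+x. (\<Prod>j<p. ennreal (exp (w j * x j))) \<partial>gauss_vec p)"
    by (simp add: inner_p_def exp_sum prod_ennreal)
  also have "\<dots> = (\<Prod>j<p. ennreal (exp ((w j)\<^sup>2 / 2)))"
    unfolding gauss_vec_def
    using product_nn_integral_prod[of "{..<p}" "\<lambda>j y. ennreal (exp (w j * y))"]
    by (simp add: nn_integral_std_normal_exp)
  also have "\<dots> = ennreal (exp ((norm_p p w)\<^sup>2 / 2))"
    by (simp add: norm_p_def prod_ennreal exp_sum[symmetric] sum_divide_distrib sum_nonneg)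
  finally show ?thesis .
qed

lemma gauss_vec_exp_inner:
  "integrable (gauss_vec p) (\<lambda>x. exp (inner_p p w x))"
  "(\<integral>x. exp (inner_p p w x) \<partial>gauss_vec p) = exp ((norm_p p w)\<^sup>2 / 2)"
  using nn_integral_gauss_vec_exp_inner[of p w]
  by (subst (asm) nn_integral_eq_integrable; simp)+

lemma gauss_vec_coordinate:
  assumes "j < p"
  shows "integrable (gauss_vec p) (\<lambda>x. x j)" "(\<integral>x. x j \<partial>gauss_vec p) = 0"
proof -
  have coord: "(\<lambda>x. x j) \<in> measurable (gauss_vec p) std_normal"
    unfolding gauss_vec_def by (rule measurable_component_singleton) (use assms in simp)
  have law: "distr (gauss_vec p) std_normal (\<lambda>x. x j) = std_normal"
    unfolding gauss_vec_def
    by (rule distr_PiM_component[where M = "\<lambda>_. std_normal"]) (use assms prob_space_std_normal in simp_all)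
  have id_meas: "(\<lambda>x. x) \<in> borel_measurable std_normal"
    by simp
  show "integrable (gauss_vec p) (\<lambda>x. x j)"
    using integrable_distr_eq[OF coord id_meas] std_normal_integrable_mean_zero(1)
    unfolding law by simp
  have "(\<integral>x. x j \<partial>gauss_vec p) = (\<integral>x. x \<partial>distr (gauss_vec p) std_normal (\<lambda>x. x j))"
    by (rule integral_distr[OF coord id_meas, symmetric])
  then show "(\<integral>x. x j \<partial>gauss_vec p) = 0"
    unfolding law using std_normal_integrable_mean_zero(2) by simp
qed

lemma gauss_vec_inner_mean_zero: "(\<integral>x. inner_p p w x \<partial>gauss_vec p) = 0"
  using gauss_vec_coordinate by (simp add: inner_p_def)

lemma prob_space_uniform_interval: "s < t \<Longrightarrow> prob_space (uniform_measure lborel {s..t::real})"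
  by (rule prob_space_uniform_measure) auto

lemma prob_space_joint_law: "s < t \<Longrightarrow> prob_space (joint_law p s t)"
  unfolding joint_law_def
  by (intro prob_space_pair prob_space_gauss_vec prob_space_uniform_interval)

lemma joint_law_fst:
  fixes f :: "(nat \<Rightarrow> real) \<Rightarrow> real"
  assumes "s < t" and f: "f \<in> borel_measurable (gauss_vec p)"
  shows "integrable (joint_law p s t) (\<lambda>\<omega>. f (fst \<omega>)) \<longleftrightarrow> integrable (gauss_vec p) f"
    and "(\<integral>\<omega>. f (fst \<omega>) \<partial>joint_law p s t) = (\<integral>x. f x \<partial>gauss_vec p)"
proof -
  interpret U: prob_space "uniform_measure lborel {s..t}"
    using \<open>s < t\<close> by (rule prob_space_uniform_interval)
  interpret G: prob_space "gauss_vec p"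
    by (rule prob_space_gauss_vec)
  have fst_law: "distr (joint_law p s t) (gauss_vec p) fst = gauss_vec p"
    unfolding joint_law_def by (rule U.distr_pair_fst)
  have fst_meas: "fst \<in> measurable (joint_law p s t) (gauss_vec p)"
    unfolding joint_law_def by (rule measurable_fst)
  show "integrable (joint_law p s t) (\<lambda>\<omega>. f (fst \<omega>)) \<longleftrightarrow> integrable (gauss_vec p) f"
    using integrable_distr_eq[OF fst_meas f] by (simp add: fst_law)
  show "(\<integral>\<omega>. f (fst \<omega>) \<partial>joint_law p s t) = (\<integral>x. f x \<partial>gauss_vec p)"
    using integral_distr[OF fst_meas f] by (simp add: fst_law)
qed

lemma joint_law_exp_inner:
  assumes "s < t"
  shows "integrable (joint_law p s t) (\<lambda>\<omega>. exp (inner_p p w (fst \<omega>)))"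
    and "(\<integral>\<omega>. exp (inner_p p w (fst \<omega>)) \<partial>joint_law p s t) = exp ((norm_p p w)\<^sup>2 / 2)"
  using joint_law_fst[OF assms, where f = "\<lambda>x. exp (inner_p p w x)"] gauss_vec_exp_inner[of p w]
  by simp_all

lemma joint_law_inner_mean_zero:
  assumes "s < t"
  shows "(\<integral>\<omega>. inner_p p w (fst \<omega>) \<partial>joint_law p s t) = 0"
  using joint_law_fst(2)[OF assms, where f = "inner_p p w"] gauss_vec_inner_mean_zero[of p w]
  by simp

lemma inner_p_scale_left: "inner_p p (\<lambda>j. c * w j) x = c * inner_p p w x"
  by (simp add: inner_p_def sum_distrib_left mult.assoc)

lemma norm_p_scale_left_sq: "(norm_p p (\<lambda>j. c * w j))\<^sup>2 = c\<^sup>2 * (norm_p p w)\<^sup>2"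
  by (simp add: norm_p_def sum_nonneg power_mult_distrib sum_distrib_left)

lemma avec_eq_indicator_mult:
  "avec p u b \<omega> i = indicator {\<omega>. \<bar>b + inner_p p (fst \<omega>) u\<bar> < snd \<omega>} \<omega> * (b * fst \<omega> i)"
  unfolding avec_def by simp

lemma measurable_avec: "i < p \<Longrightarrow> (\<lambda>\<omega>. avec p u b \<omega> i) \<in> borel_measurable (joint_law p s t)"
  unfolding avec_def joint_law_def gauss_vec_def inner_p_def by measurable

lemma integrable_avec:
  assumes "s < t" "i < p"
  shows "integrable (joint_law p s t) (\<lambda>\<omega>. avec p u b \<omega> i)"
proof (rule integrable_masked)
  show "integrable (joint_law p s t) (\<lambda>\<omega>. b * fst \<omega> i)"
    using joint_law_fst(1)[OF assms(1), where f = "\<lambda>x. b * x i"] gauss_vec_coordinate(1)[OF assms(2)]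
    by (simp add: gauss_vec_def assms(2))
  show "(\<lambda>\<omega>. avec p u b \<omega> i) \<in> borel_measurable (joint_law p s t)"
    using assms(2) by (rule measurable_avec)
  show "avec p u b \<omega> i = 0 \<or> avec p u b \<omega> i = b * fst \<omega> i" for \<omega>
    by (simp add: avec_eq_indicator_mult split: split_indicator)
qed

lemma inner_avec_masked:
  "(\<Sum>i<p. t' i * avec p u b \<omega> i) = 0 \<or> (\<Sum>i<p. t' i * avec p u b \<omega> i) = b * inner_p p t' (fst \<omega>)"
  by (simp add: avec_eq_indicator_mult inner_p_def sum_distrib_left mult_ac split: split_indicator)

lemma inner_avec_centered:
  assumes "s < t"
  shows "(\<Sum>i<p. t' i * (avec p u b \<omega> i - (\<integral>\<omega>'. avec p u b \<omega>' i \<partial>joint_law p s t)))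
    = (\<Sum>i<p. t' i * avec p u b \<omega> i) - (\<integral>\<omega>'. (\<Sum>i<p. t' i * avec p u b \<omega>' i) \<partial>joint_law p s t)"
  using integrable_avec[OF assms] by (simp add: right_diff_distrib sum_subtractf)

theorem mainTheorem9:
  shows "\<exists>c>0. \<forall>(p::nat) (s::real) (t::real) (u::nat \<Rightarrow> real) (b::real) (t'::nat \<Rightarrow> real).
     0 \<le> s \<longrightarrow> s < t \<longrightarrow>
     (\<integral>\<^sup>+ \<omega>. ennreal (exp (\<Sum>i<p. t' i *
          (avec p u b \<omega> i - (\<integral>\<omega>'. avec p u b \<omega>' i \<partial>joint_law p s t)))) \<partial>joint_law p s t)
       \<le> ennreal (exp (c * b\<^sup>2 * (norm_p p t')\<^sup>2 / 2))"
proof (intro exI[of _ "4 :: real"] conjI allI impI)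
  fix p :: nat and s t b :: real and u t' :: "nat \<Rightarrow> real"
  assume "0 \<le> s" and st: "s < t"
  interpret J: prob_space "joint_law p s t"
    using st by (rule prob_space_joint_law)
  define Y :: "(nat \<Rightarrow> real) \<times> real \<Rightarrow> real" where "Y \<omega> = b * inner_p p t' (fst \<omega>)" for \<omega>
  define Z where "Z \<omega> = (\<Sum>i<p. t' i * avec p u b \<omega> i)" for \<omega>
  have exp_Y: "integrable (joint_law p s t) (\<lambda>\<omega>. exp (c * Y \<omega>))"
    "J.expectation (\<lambda>\<omega>. exp (c * Y \<omega>)) = exp (c\<^sup>2 * (b\<^sup>2 * (norm_p p t')\<^sup>2 / 2))" for c
    using joint_law_exp_inner[OF st, of p "\<lambda>j. (c * b) * t' j"]
    by (simp_all add: Y_def inner_p_scale_left norm_p_scale_left_sq power_mult_distrib mult.assoc)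
  have "(\<integral>\<^sup>+\<omega>. ennreal (exp (Z \<omega> - J.expectation Z)) \<partial>joint_law p s t)
      \<le> ennreal (exp (4 * (b\<^sup>2 * (norm_p p t')\<^sup>2 / 2)))"
  proof (rule J.nn_integral_exp_centered_masked_le[where Y = Y])
    show "Y \<in> borel_measurable (joint_law p s t)"
      unfolding Y_def[abs_def] joint_law_def by measurable
    show "J.expectation Y = 0"
      using joint_law_inner_mean_zero[OF st] by (simp add: Y_def[abs_def])
    show "Z \<in> borel_measurable (joint_law p s t)"
      unfolding Z_def[abs_def]
      by (intro borel_measurable_sum borel_measurable_times borel_measurable_const measurable_avec) simp
    show "Z \<omega> = 0 \<or> Z \<omega> = Y \<omega>" for \<omega>
      unfolding Z_def Y_def by (rule inner_avec_masked)
  qed (use exp_Y[of 1] exp_Y[of "-1"] in simp_all)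
  then show "(\<integral>\<^sup>+ \<omega>. ennreal (exp (\<Sum>i<p. t' i *
          (avec p u b \<omega> i - (\<integral>\<omega>'. avec p u b \<omega>' i \<partial>joint_law p s t)))) \<partial>joint_law p s t)
       \<le> ennreal (exp (4 * b\<^sup>2 * (norm_p p t')\<^sup>2 / 2))"
    by (simp add: inner_avec_centered[OF st] Z_def[abs_def])
qed simp

end
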